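(* Let $R$ be a ring, $\mathfrak{M}$ a formation of $R$-modules, $G$ a group and $A$ an $RG$-module. Then $\mathbf{Coc}_{\mathfrak{M}}(G) = \{x \in G \mid A/C_A(x) \in \mathfrak{M}\}$ is a normal subgroup of $G$.
   Context: A class $\mathfrak{M}$ of $R$-modules (closed under isomorphism) is a formation if: (F1) whenever $A \in \mathfrak{M}$ and $B$ is an $R$-submodule of $A$, $A/B \in \mathfrak{M}$; (F2) whenever $A$ is an $R$-module and $B_1,\dots,B_k$ are submodules with $A/B_j \in \mathfrak{M}$ for all $j$, then $A/(B_1\cap\dots\cap B_k) \in \mathfrak{M}$. For $x \in G$, $C_A(x) = \{a\in A \mid ax = a\}$. *)

theory Defs
  imports "HOL-Algebra.Algebra"
begin

text \<open>The library locale module requires a commutative ring, so we define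
(left) R-modules over an arbitrary ring R ourselves, with the same axioms.\<close>

definition rmodule :: "('r, 'm) ring_scheme \<Rightarrow> ('r, 'a, 'c) module_scheme \<Rightarrow> bool" where
  "rmodule R A \<longleftrightarrow> ring R \<and> abelian_group A \<and>
    (\<forall>r\<in>carrier R. \<forall>a\<in>carrier A. r \<odot>\<^bsub>A\<^esub> a \<in> carrier A) \<and>
    (\<forall>r\<in>carrier R. \<forall>s\<in>carrier R. \<forall>a\<in>carrier A.
        (r \<oplus>\<^bsub>R\<^esub> s) \<odot>\<^bsub>A\<^esub> a = r \<odot>\<^bsub>A\<^esub> a \<oplus>\<^bsub>A\<^esub> s \<odot>\<^bsub>A\<^esub> a) \<and>
    (\<forall>r\<in>carrier R. \<forall>a\<in>carrier A. \<forall>b\<in>carrier A.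
        r \<odot>\<^bsub>A\<^esub> (a \<oplus>\<^bsub>A\<^esub> b) = r \<odot>\<^bsub>A\<^esub> a \<oplus>\<^bsub>A\<^esub> r \<odot>\<^bsub>A\<^esub> b) \<and>
    (\<forall>r\<in>carrier R. \<forall>s\<in>carrier R. \<forall>a\<in>carrier A.
        (r \<otimes>\<^bsub>R\<^esub> s) \<odot>\<^bsub>A\<^esub> a = r \<odot>\<^bsub>A\<^esub> (s \<odot>\<^bsub>A\<^esub> a)) \<and>
    (\<forall>a\<in>carrier A. \<one>\<^bsub>R\<^esub> \<odot>\<^bsub>A\<^esub> a = a)"

definition rsubmodule :: "'a set \<Rightarrow> ('r, 'm) ring_scheme \<Rightarrow> ('r, 'a, 'c) module_scheme \<Rightarrow> bool" where
  "rsubmodule B R A \<longleftrightarrow> subgroup B (add_monoid A) \<and>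
    (\<forall>r\<in>carrier R. \<forall>b\<in>B. r \<odot>\<^bsub>A\<^esub> b \<in> B)"

text \<open>The quotient module A/B: carrier are the cosets B + a, addition is
addition of cosets, zero is B, and r(B + a) = B + ra (written without choice
as the union over representatives). The ring multiplication fields of the
record are irrelevant and left undefined.\<close>
definition quot_mod :: "('r, 'a, 'c) module_scheme \<Rightarrow> 'a set \<Rightarrow> ('r, 'a set) module" where
  "quot_mod A B = \<lparr> carrier = a_rcosets\<^bsub>A\<^esub> B,
                     monoid.mult = (\<lambda>u v. undefined), monoid.one = undefined,
                     ring.zero = B, ring.add = set_add A,
                     module.smult = (\<lambda>r U. \<Union>a\<in>U. a_r_coset A B (r \<odot>\<^bsub>A\<^esub> a)) \<rparr>"

definition rmod_iso :: "('r, 'm) ring_scheme \<Rightarrow> ('r, 'a, 'c) module_scheme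
    \<Rightarrow> ('r, 'b, 'd) module_scheme \<Rightarrow> ('a \<Rightarrow> 'b) \<Rightarrow> bool" where
  "rmod_iso R A A' f \<longleftrightarrow> bij_betw f (carrier A) (carrier A') \<and>
    (\<forall>a\<in>carrier A. \<forall>b\<in>carrier A. f (a \<oplus>\<^bsub>A\<^esub> b) = f a \<oplus>\<^bsub>A'\<^esub> f b) \<and>
    (\<forall>r\<in>carrier R. \<forall>a\<in>carrier A. f (r \<odot>\<^bsub>A\<^esub> a) = r \<odot>\<^bsub>A'\<^esub> f a)"

definition rmod_isomorphic :: "('r, 'm) ring_scheme \<Rightarrow> ('r, 'a, 'c) module_scheme
    \<Rightarrow> ('r, 'b, 'd) module_scheme \<Rightarrow> bool" where
  "rmod_isomorphic R A A' \<longleftrightarrow> (\<exists>f. rmod_iso R A A' f)"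

text \<open>A class of R-modules is represented by a predicate M on R-modules whose
carrier lives in a fixed universe type 'a. A module of any other type belongs
to the class (up to isomorphism) if it is isomorphic to a member of M.\<close>
definition in_class :: "('r, 'm) ring_scheme \<Rightarrow> (('r, 'a) module \<Rightarrow> bool)
    \<Rightarrow> ('r, 'b, 'd) module_scheme \<Rightarrow> bool" where
  "in_class R M Q \<longleftrightarrow> (\<exists>Q'. M Q' \<and> rmod_isomorphic R Q' Q)"

definition formation :: "('r, 'm) ring_scheme \<Rightarrow> (('r, 'a) module \<Rightarrow> bool) \<Rightarrow> bool" where
  "formation R M \<longleftrightarrow>
     (\<forall>A. M A \<longrightarrow> rmodule R A) \<and>
     (\<forall>A A'. M A \<and> rmodule R A' \<and> rmod_isomorphic R A A' \<longrightarrow> M A') \<and>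
     (\<forall>A B. M A \<and> rsubmodule B R A \<longrightarrow> in_class R M (quot_mod A B)) \<and>
     (\<forall>(A :: ('r, 'a) module) Bs. rmodule R A \<and> finite Bs \<and> Bs \<noteq> {} \<and>
        (\<forall>B\<in>Bs. rsubmodule B R A \<and> in_class R M (quot_mod A B))
        \<longrightarrow> in_class R M (quot_mod A (\<Inter>Bs)))"

text \<open>An RG-module: an R-module A with a right action of the group G by
R-module automorphisms, written act a x for the image ax of a under x.\<close>
definition rg_module :: "('r, 'm) ring_scheme \<Rightarrow> ('g, 'n) monoid_scheme
    \<Rightarrow> ('r, 'a, 'c) module_scheme \<Rightarrow> ('a \<Rightarrow> 'g \<Rightarrow> 'a) \<Rightarrow> bool" where
  "rg_module R G A act \<longleftrightarrow> rmodule R A \<and> group G \<and>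
    (\<forall>x\<in>carrier G. \<forall>a\<in>carrier A. act a x \<in> carrier A) \<and>
    (\<forall>x\<in>carrier G. \<forall>a\<in>carrier A. \<forall>b\<in>carrier A.
        act (a \<oplus>\<^bsub>A\<^esub> b) x = act a x \<oplus>\<^bsub>A\<^esub> act b x) \<and>
    (\<forall>x\<in>carrier G. \<forall>r\<in>carrier R. \<forall>a\<in>carrier A.
        act (r \<odot>\<^bsub>A\<^esub> a) x = r \<odot>\<^bsub>A\<^esub> act a x) \<and>
    (\<forall>a\<in>carrier A. act a \<one>\<^bsub>G\<^esub> = a) \<and>
    (\<forall>x\<in>carrier G. \<forall>y\<in>carrier G. \<forall>a\<in>carrier A.
        act (act a x) y = act a (x \<otimes>\<^bsub>G\<^esub> y))"

definition centralizer_mod :: "('r, 'a, 'c) module_scheme \<Rightarrow> ('a \<Rightarrow> 'g \<Rightarrow> 'a) \<Rightarrow> 'g \<Rightarrow> 'a set" where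
  "centralizer_mod A act x = {a \<in> carrier A. act a x = a}"

definition Coc :: "('r, 'm) ring_scheme \<Rightarrow> (('r, 'a) module \<Rightarrow> bool) \<Rightarrow> ('g, 'n) monoid_scheme
    \<Rightarrow> ('r, 'a, 'c) module_scheme \<Rightarrow> ('a \<Rightarrow> 'g \<Rightarrow> 'a) \<Rightarrow> 'g set" where
  "Coc R M G A act = {x \<in> carrier G. in_class R M (quot_mod A (centralizer_mod A act x))}"

end

theory Submission
  imports Defs
begin

text \<open>Write C(x) for C_A(x). Since C(1) = A, the quotient A/C(1) is the zero module, a quotient
of any member of the formation. Since C(x\<inverse>) = C(x), the set is closed under inverses. For x, y
in the set, A/(C(x) \<inter> C(y)) lies in the formation by (F2), and A/C(xy) is a quotient of it
because C(x) \<inter> C(y) \<subseteq> C(xy), so it lies in the formation by (F1). Finally, the automorphism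
a \<mapsto> a g\<inverse> of A maps C(h) onto C(g h g\<inverse>) and hence induces A/C(h) \<cong> A/C(g h g\<inverse>).\<close>

section \<open>Submodules, cosets and quotient modules\<close>

lemma abelian_subgroup_if_rsubmodule:
  assumes "rmodule R A" "rsubmodule E R A"
  shows "abelian_subgroup E A"
  using assms by (intro abelian_subgroupI3 additive_subgroupI) (auto simp: rmodule_def rsubmodule_def)

lemma rsubmodule_Int:
  assumes "rmodule R A" "rsubmodule B R A" "rsubmodule C R A"
  shows "rsubmodule (B \<inter> C) R A"
  using assms group.subgroups_Inter_pair[OF abelian_group.a_group]
  unfolding rsubmodule_def rmodule_def by blast

lemma (in abelian_subgroup) a_rcos_eq_iff:
  assumes "x \<in> carrier G" "y \<in> carrier G"
  shows "H +> x = H +> y \<longleftrightarrow> x \<oplus> \<ominus> y \<in> H"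
proof
  assume "H +> x = H +> y"
  then show "x \<oplus> \<ominus> y \<in> H" using assms a_rcos_self a_rcos_module_imp by metis
next
  assume "x \<oplus> \<ominus> y \<in> H"
  then show "H +> x = H +> y" using assms a_rcos_module_rev a_repr_independence' by metis
qed

lemma (in abelian_subgroup) a_rcos_eq_self_iff:
  "x \<in> carrier G \<Longrightarrow> H +> x = H \<longleftrightarrow> x \<in> H"
  using a_coset_join1 a_coset_join2 a_subgroup by blast

lemma a_rcos_eq_mono:
  assumes "abelian_subgroup D A" "abelian_subgroup E A" "D \<subseteq> E"
    and "x \<in> carrier A" "y \<in> carrier A" "D +>\<^bsub>A\<^esub> x = D +>\<^bsub>A\<^esub> y"
  shows "E +>\<^bsub>A\<^esub> x = E +>\<^bsub>A\<^esub> y"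
  using assms abelian_subgroup.a_rcos_eq_iff[OF assms(1)] abelian_subgroup.a_rcos_eq_iff[OF assms(2)]
  by blast

lemma carrier_quot_mod: "carrier (quot_mod A E) = a_rcosets\<^bsub>A\<^esub> E"
  by (simp add: quot_mod_def)

lemma quot_mod_add: "U \<oplus>\<^bsub>quot_mod A E\<^esub> V = U <+>\<^bsub>A\<^esub> V"
  by (simp add: quot_mod_def)

lemma quot_mod_smult_rcos:
  assumes A: "rmodule R A" and E: "rsubmodule E R A" and a: "a \<in> carrier A" and r: "r \<in> carrier R"
  shows "r \<odot>\<^bsub>quot_mod A E\<^esub> (E +>\<^bsub>A\<^esub> a) = E +>\<^bsub>A\<^esub> (r \<odot>\<^bsub>A\<^esub> a)"
proof -
  interpret EA: abelian_subgroup E A using abelian_subgroup_if_rsubmodule[OF A E] .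
  have ra: "r \<odot>\<^bsub>A\<^esub> a \<in> carrier A" using A a r by (simp add: rmodule_def)
  have same_coset: "E +>\<^bsub>A\<^esub> (r \<odot>\<^bsub>A\<^esub> x) = E +>\<^bsub>A\<^esub> (r \<odot>\<^bsub>A\<^esub> a)" if x: "x \<in> E +>\<^bsub>A\<^esub> a" for x
  proof -
    obtain e where e: "e \<in> E" "x = e \<oplus>\<^bsub>A\<^esub> a" using x unfolding a_r_coset_def' by auto
    have "r \<odot>\<^bsub>A\<^esub> x = r \<odot>\<^bsub>A\<^esub> e \<oplus>\<^bsub>A\<^esub> r \<odot>\<^bsub>A\<^esub> a"
      using A r a e by (simp add: rmodule_def)
    moreover have "r \<odot>\<^bsub>A\<^esub> e \<in> E" using E r e(1) by (simp add: rsubmodule_def)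
    ultimately have "r \<odot>\<^bsub>A\<^esub> x \<in> E +>\<^bsub>A\<^esub> (r \<odot>\<^bsub>A\<^esub> a)"
      using EA.a_rcosI EA.a_subset ra by simp
    then show ?thesis using EA.a_repr_independence' ra by metis
  qed
  have "a \<in> E +>\<^bsub>A\<^esub> a" using EA.a_rcos_self a by blast
  then have "(\<Union>x\<in>E +>\<^bsub>A\<^esub> a. E +>\<^bsub>A\<^esub> (r \<odot>\<^bsub>A\<^esub> x)) = E +>\<^bsub>A\<^esub> (r \<odot>\<^bsub>A\<^esub> a)"
    using same_coset by blast
  then show ?thesis by (simp add: quot_mod_def)
qed

lemma rmod_isomorphic_trans:
  assumes "rmod_isomorphic R A B" "rmod_isomorphic R B C"
  shows "rmod_isomorphic R A C"
proof -
  obtain f g where f: "rmod_iso R A B f" and g: "rmod_iso R B C g"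
    using assms unfolding rmod_isomorphic_def by blast
  have "f a \<in> carrier B" if "a \<in> carrier A" for a
    using f that unfolding rmod_iso_def bij_betw_def by auto
  then have "rmod_iso R A C (g \<circ> f)"
    using f g unfolding rmod_iso_def by (auto intro: bij_betw_trans)
  then show ?thesis unfolding rmod_isomorphic_def by blast
qed

lemma in_class_rmod_isomorphic:
  "in_class R M Q \<Longrightarrow> rmod_isomorphic R Q Q' \<Longrightarrow> in_class R M Q'"
  unfolding in_class_def using rmod_isomorphic_trans by blast

section \<open>An isomorphism theorem\<close>

text \<open>The map q \<mapsto> E + \<sigma> q is an R-linear surjection Q \<rightarrow> A/E; only this composite, not \<sigma>
itself, is required to be linear.\<close>

locale quot_epimorphism =
  fixes R :: "('r, 'm) ring_scheme" and Q :: "('r, 'q, 'c) module_scheme"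
    and A :: "('r, 'b, 'd) module_scheme" and E :: "'b set" and \<sigma> :: "'q \<Rightarrow> 'b"
  assumes rmodule_Q: "rmodule R Q" and rmodule_A: "rmodule R A"
    and rsubmodule_E: "rsubmodule E R A"
    and \<sigma>_closed: "\<And>q. q \<in> carrier Q \<Longrightarrow> \<sigma> q \<in> carrier A"
    and \<sigma>_add: "\<And>p q. p \<in> carrier Q \<Longrightarrow> q \<in> carrier Q \<Longrightarrow>
        E +>\<^bsub>A\<^esub> \<sigma> (p \<oplus>\<^bsub>Q\<^esub> q) = E +>\<^bsub>A\<^esub> (\<sigma> p \<oplus>\<^bsub>A\<^esub> \<sigma> q)"
    and \<sigma>_smult: "\<And>r q. r \<in> carrier R \<Longrightarrow> q \<in> carrier Q \<Longrightarrow>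
        E +>\<^bsub>A\<^esub> \<sigma> (r \<odot>\<^bsub>Q\<^esub> q) = E +>\<^bsub>A\<^esub> (r \<odot>\<^bsub>A\<^esub> \<sigma> q)"
    and \<sigma>_onto: "\<And>a. a \<in> carrier A \<Longrightarrow> \<exists>q\<in>carrier Q. E +>\<^bsub>A\<^esub> \<sigma> q = E +>\<^bsub>A\<^esub> a"
begin

abbreviation coset_map :: "'q \<Rightarrow> 'b set" where
  "coset_map q \<equiv> E +>\<^bsub>A\<^esub> \<sigma> q"

abbreviation preimage :: "'q set" where
  "preimage \<equiv> {q \<in> carrier Q. \<sigma> q \<in> E}"

lemma abelian_subgroup_E: "abelian_subgroup E A"
  using abelian_subgroup_if_rsubmodule[OF rmodule_A rsubmodule_E] .

lemma coset_map_in_rcosets: "q \<in> carrier Q \<Longrightarrow> coset_map q \<in> a_rcosets\<^bsub>A\<^esub> E"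
proof -
  interpret EA: abelian_subgroup E A by (rule abelian_subgroup_E)
  show "q \<in> carrier Q \<Longrightarrow> ?thesis" using EA.a_rcosetsI[OF EA.a_subset \<sigma>_closed] .
qed

lemma coset_map_closed: "q \<in> carrier Q \<Longrightarrow> coset_map q \<in> carrier (A A_Mod E)"
  using coset_map_in_rcosets by (simp add: A_FactGroup_def FactGroup_def A_RCOSETS_def)

lemma coset_map_add:
  "p \<in> carrier Q \<Longrightarrow> q \<in> carrier Q \<Longrightarrow>
    coset_map (p \<oplus>\<^bsub>Q\<^esub> q) = coset_map p \<otimes>\<^bsub>A A_Mod E\<^esub> coset_map q"
  using \<sigma>_add abelian_subgroup.a_rcos_sum[OF abelian_subgroup_E] \<sigma>_closed by simp

lemma group_hom_coset_map: "group_hom (add_monoid Q) (A A_Mod E) coset_map"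
  using rmodule_Q abelian_subgroup.a_factorgroup_is_group[OF abelian_subgroup_E]
    coset_map_closed coset_map_add
  by (auto simp: group_hom_def group_hom_axioms_def hom_def rmodule_def abelian_group.a_group)

lemma kernel_coset_map: "kernel (add_monoid Q) (A A_Mod E) coset_map = preimage"
  using abelian_subgroup.a_rcos_eq_self_iff[OF abelian_subgroup_E] \<sigma>_closed
  by (auto simp: kernel_def A_FactGroup_def FactGroup_def)

lemma rsubmodule_preimage: "rsubmodule preimage R Q"
  unfolding rsubmodule_def
proof (intro conjI ballI)
  show "subgroup preimage (add_monoid Q)"
    using group_hom.subgroup_kernel[OF group_hom_coset_map] kernel_coset_map by simp
next
  fix r q assume r: "r \<in> carrier R" and q: "q \<in> preimage"
  interpret EA: abelian_subgroup E A by (rule abelian_subgroup_E)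
  have rq: "r \<odot>\<^bsub>Q\<^esub> q \<in> carrier Q" using rmodule_Q r q by (simp add: rmodule_def)
  have "r \<odot>\<^bsub>A\<^esub> \<sigma> q \<in> E" using rsubmodule_E r q by (simp add: rsubmodule_def)
  then have "coset_map (r \<odot>\<^bsub>Q\<^esub> q) = E"
    using \<sigma>_smult[OF r] q EA.a_rcos_eq_self_iff EA.a_Hcarr by simp
  then show "r \<odot>\<^bsub>Q\<^esub> q \<in> preimage" using EA.a_rcos_eq_self_iff \<sigma>_closed[OF rq] rq by auto
qed

lemma coset_map_onto: "coset_map ` carrier (add_monoid Q) = carrier (A A_Mod E)"
proof
  show "coset_map ` carrier (add_monoid Q) \<subseteq> carrier (A A_Mod E)" using coset_map_closed by auto
  show "carrier (A A_Mod E) \<subseteq> coset_map ` carrier (add_monoid Q)"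
  proof
    fix Z assume "Z \<in> carrier (A A_Mod E)"
    then obtain a where "a \<in> carrier A" "Z = E +>\<^bsub>A\<^esub> a"
      by (auto simp: A_FactGroup_def FactGroup_def RCOSETS_def a_r_coset_def)
    then show "Z \<in> coset_map ` carrier (add_monoid Q)" using \<sigma>_onto by force
  qed
qed

lemma coset_map_image_rcos:
  assumes q: "q \<in> carrier Q"
  shows "the_elem (coset_map ` (preimage +>\<^bsub>Q\<^esub> q)) = coset_map q"
proof -
  interpret EA: abelian_subgroup E A by (rule abelian_subgroup_E)
  interpret KQ: abelian_subgroup preimage Q
    using abelian_subgroup_if_rsubmodule[OF rmodule_Q rsubmodule_preimage] .
  have const: "coset_map x = coset_map q" if x: "x \<in> preimage +>\<^bsub>Q\<^esub> q" for x
  proof -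
    obtain k where k: "k \<in> carrier Q" "\<sigma> k \<in> E" "x = k \<oplus>\<^bsub>Q\<^esub> q"
      using x unfolding a_r_coset_def' by blast
    have "coset_map x = coset_map k <+>\<^bsub>A\<^esub> coset_map q"
      using coset_map_add[OF k(1) q] k(3) by simp
    also have "coset_map k = E" using EA.a_rcos_eq_self_iff[OF \<sigma>_closed[OF k(1)]] k(2) by blast
    also have "E <+>\<^bsub>A\<^esub> coset_map q = coset_map q"
      using EA.rcosets_add_eq[OF coset_map_in_rcosets[OF q]] .
    finally show ?thesis .
  qed
  have "coset_map ` (preimage +>\<^bsub>Q\<^esub> q) = (\<lambda>_. coset_map q) ` (preimage +>\<^bsub>Q\<^esub> q)"
    using const by (rule image_cong[OF refl])
  also have "\<dots> = {coset_map q}" using image_constant KQ.a_rcos_self[OF q] by blast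
  finally show ?thesis by (simp only: the_elem_eq)
qed

theorem rmod_isomorphic_quot_mod_preimage:
  "rmod_isomorphic R (quot_mod Q preimage) (quot_mod A E)"
proof -
  define f where "f = (\<lambda>U. the_elem (coset_map ` U))"
  have iso: "f \<in> iso (add_monoid Q Mod preimage) (A A_Mod E)"
    using group_hom.FactGroup_iso_set[OF group_hom_coset_map coset_map_onto] kernel_coset_map
    by (simp add: f_def)
  have carrier_Q: "carrier (add_monoid Q Mod preimage) = carrier (quot_mod Q preimage)"
    by (simp add: FactGroup_def carrier_quot_mod A_RCOSETS_def)
  have carrier_A: "carrier (A A_Mod E) = carrier (quot_mod A E)"
    by (simp add: A_FactGroup_def FactGroup_def carrier_quot_mod A_RCOSETS_def)
  have "rmod_iso R (quot_mod Q preimage) (quot_mod A E) f"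
    unfolding rmod_iso_def
  proof (intro conjI ballI)
    show "bij_betw f (carrier (quot_mod Q preimage)) (carrier (quot_mod A E))"
      using iso carrier_Q carrier_A by (simp add: iso_def)
  next
    fix U V assume "U \<in> carrier (quot_mod Q preimage)" "V \<in> carrier (quot_mod Q preimage)"
    then have "f (U \<otimes>\<^bsub>add_monoid Q Mod preimage\<^esub> V) = f U \<otimes>\<^bsub>A A_Mod E\<^esub> f V"
      using iso carrier_Q unfolding iso_def hom_def by auto
    then show "f (U \<oplus>\<^bsub>quot_mod Q preimage\<^esub> V) = f U \<oplus>\<^bsub>quot_mod A E\<^esub> f V"
      by (simp add: quot_mod_add set_add_def)
  next
    fix r U assume r: "r \<in> carrier R" and "U \<in> carrier (quot_mod Q preimage)"
    then obtain q where q: "q \<in> carrier Q" "U = preimage +>\<^bsub>Q\<^esub> q"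
      by (auto simp: carrier_quot_mod A_RCOSETS_def')
    have rq: "r \<odot>\<^bsub>Q\<^esub> q \<in> carrier Q" using rmodule_Q r q by (simp add: rmodule_def)
    have "f (r \<odot>\<^bsub>quot_mod Q preimage\<^esub> U) = coset_map (r \<odot>\<^bsub>Q\<^esub> q)"
      using quot_mod_smult_rcos[OF rmodule_Q rsubmodule_preimage q(1) r] coset_map_image_rcos[OF rq] q(2)
      by (simp add: f_def)
    also have "\<dots> = r \<odot>\<^bsub>quot_mod A E\<^esub> coset_map q"
      using \<sigma>_smult[OF r q(1)] quot_mod_smult_rcos[OF rmodule_A rsubmodule_E \<sigma>_closed[OF q(1)] r] by simp
    finally show "f (r \<odot>\<^bsub>quot_mod Q preimage\<^esub> U) = r \<odot>\<^bsub>quot_mod A E\<^esub> f U"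
      using coset_map_image_rcos[OF q(1)] q(2) by (simp add: f_def)
  qed
  then show ?thesis unfolding rmod_isomorphic_def by blast
qed

end

lemma rsubmodule_carrier:
  assumes "rmodule R A"
  shows "rsubmodule (carrier A) R A"
proof -
  interpret AA: abelian_group A using assms by (simp add: rmodule_def)
  show ?thesis
    using assms AA.add.subgroup_self unfolding rsubmodule_def rmodule_def by simp
qed

lemma rmod_isomorphic_quot_mod_carrier:
  assumes Q: "rmodule R Q" and A: "rmodule R A"
  shows "rmod_isomorphic R (quot_mod Q (carrier Q)) (quot_mod A (carrier A))"
proof -
  interpret AA: abelian_subgroup "carrier A" A
    using abelian_subgroup_if_rsubmodule[OF A rsubmodule_carrier[OF A]] .
  interpret QQ: abelian_group Q using Q by (simp add: rmodule_def)
  have whole: "carrier A +>\<^bsub>A\<^esub> a = carrier A" if "a \<in> carrier A" for a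
    using AA.a_rcos_eq_self_iff that by blast
  have zero_smult: "r \<odot>\<^bsub>A\<^esub> \<zero>\<^bsub>A\<^esub> \<in> carrier A" if "r \<in> carrier R" for r
    using A that unfolding rmodule_def by blast
  interpret quot_epimorphism R Q A "carrier A" "\<lambda>_. \<zero>\<^bsub>A\<^esub>"
  proof
    show "\<exists>q\<in>carrier Q. carrier A +>\<^bsub>A\<^esub> \<zero>\<^bsub>A\<^esub> = carrier A +>\<^bsub>A\<^esub> a" if "a \<in> carrier A" for a
      using QQ.zero_closed whole[OF that] whole[OF AA.zero_closed] by blast
  qed (simp_all add: Q A rsubmodule_carrier[OF A] whole zero_smult)
  show ?thesis using rmod_isomorphic_quot_mod_preimage by simp
qed

lemma quot_epimorphism_if_rmod_iso_quot_mod: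
  assumes Q: "rmodule R Q" and A: "rmodule R A" and D: "rsubmodule D R A"
    and f: "rmod_iso R Q (quot_mod A D) f"
  shows "\<exists>\<sigma>. quot_epimorphism R Q A D \<sigma>"
proof -
  interpret DA: abelian_subgroup D A using abelian_subgroup_if_rsubmodule[OF A D] .
  interpret QQ: abelian_group Q using Q by (simp add: rmodule_def)
  have "f q \<in> a_rcosets\<^bsub>A\<^esub> D" if "q \<in> carrier Q" for q
    using f that unfolding rmod_iso_def bij_betw_def by (auto simp: carrier_quot_mod)
  then have "\<exists>a. a \<in> carrier A \<and> f q = D +>\<^bsub>A\<^esub> a" if "q \<in> carrier Q" for q
    using that unfolding A_RCOSETS_def' by auto
  then obtain \<sigma> where \<sigma>: "\<And>q. q \<in> carrier Q \<Longrightarrow> \<sigma> q \<in> carrier A \<and> f q = D +>\<^bsub>A\<^esub> \<sigma> q"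
    by metis
  have "quot_epimorphism R Q A D \<sigma>"
  proof
    fix p q assume p: "p \<in> carrier Q" and q: "q \<in> carrier Q"
    have "D +>\<^bsub>A\<^esub> \<sigma> (p \<oplus>\<^bsub>Q\<^esub> q) = f p <+>\<^bsub>A\<^esub> f q"
      using f p q \<sigma>[of "p \<oplus>\<^bsub>Q\<^esub> q"] unfolding rmod_iso_def by (simp add: quot_mod_add)
    also have "\<dots> = D +>\<^bsub>A\<^esub> (\<sigma> p \<oplus>\<^bsub>A\<^esub> \<sigma> q)"
      using \<sigma>[OF p] \<sigma>[OF q] DA.a_rcos_sum by simp
    finally show "D +>\<^bsub>A\<^esub> \<sigma> (p \<oplus>\<^bsub>Q\<^esub> q) = D +>\<^bsub>A\<^esub> (\<sigma> p \<oplus>\<^bsub>A\<^esub> \<sigma> q)" .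
  next
    fix r q assume r: "r \<in> carrier R" and q: "q \<in> carrier Q"
    have rq: "r \<odot>\<^bsub>Q\<^esub> q \<in> carrier Q" using Q r q by (simp add: rmodule_def)
    have "D +>\<^bsub>A\<^esub> \<sigma> (r \<odot>\<^bsub>Q\<^esub> q) = r \<odot>\<^bsub>quot_mod A D\<^esub> f q"
      using f r q \<sigma>[OF rq] unfolding rmod_iso_def by simp
    also have "\<dots> = D +>\<^bsub>A\<^esub> (r \<odot>\<^bsub>A\<^esub> \<sigma> q)"
      using quot_mod_smult_rcos[OF A D _ r] \<sigma>[OF q] by simp
    finally show "D +>\<^bsub>A\<^esub> \<sigma> (r \<odot>\<^bsub>Q\<^esub> q) = D +>\<^bsub>A\<^esub> (r \<odot>\<^bsub>A\<^esub> \<sigma> q)" .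
  next
    fix a assume a: "a \<in> carrier A"
    have "D +>\<^bsub>A\<^esub> a \<in> carrier (quot_mod A D)"
      using DA.a_rcosetsI[OF DA.a_subset a] by (simp add: carrier_quot_mod)
    then obtain q where "q \<in> carrier Q" "f q = D +>\<^bsub>A\<^esub> a"
      using f unfolding rmod_iso_def bij_betw_def by (metis imageE)
    then show "\<exists>q\<in>carrier Q. D +>\<^bsub>A\<^esub> \<sigma> q = D +>\<^bsub>A\<^esub> a" using \<sigma> by metis
  qed (use Q A D \<sigma> in auto)
  then show ?thesis by blast
qed

text \<open>Composing with the projection A/D \<rightarrow> A/E.\<close>

lemma quot_epimorphism_mono:
  assumes "quot_epimorphism R Q A D \<sigma>" and E: "rsubmodule E R A" and DE: "D \<subseteq> E"
  shows "quot_epimorphism R Q A E \<sigma>"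
proof -
  interpret quot_epimorphism R Q A D \<sigma> by fact
  interpret EA: abelian_subgroup E A using abelian_subgroup_if_rsubmodule[OF rmodule_A E] .
  interpret DA: abelian_subgroup D A by (rule abelian_subgroup_E)
  interpret QQ: abelian_group Q using rmodule_Q by (simp add: rmodule_def)
  have enlarge: "E +>\<^bsub>A\<^esub> x = E +>\<^bsub>A\<^esub> y"
    if "x \<in> carrier A" "y \<in> carrier A" "D +>\<^bsub>A\<^esub> x = D +>\<^bsub>A\<^esub> y" for x y
    using a_rcos_eq_mono[OF DA.is_abelian_subgroup EA.is_abelian_subgroup DE that] .
  have smult_closed: "r \<odot>\<^bsub>A\<^esub> a \<in> carrier A" if "r \<in> carrier R" "a \<in> carrier A" for r a
    using rmodule_A that by (simp add: rmodule_def)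
  show ?thesis
  proof
    show "E +>\<^bsub>A\<^esub> \<sigma> (p \<oplus>\<^bsub>Q\<^esub> q) = E +>\<^bsub>A\<^esub> (\<sigma> p \<oplus>\<^bsub>A\<^esub> \<sigma> q)"
      if "p \<in> carrier Q" "q \<in> carrier Q" for p q
      using enlarge \<sigma>_add[OF that] \<sigma>_closed that QQ.a_closed by simp
    show "E +>\<^bsub>A\<^esub> \<sigma> (r \<odot>\<^bsub>Q\<^esub> q) = E +>\<^bsub>A\<^esub> (r \<odot>\<^bsub>A\<^esub> \<sigma> q)"
      if "r \<in> carrier R" "q \<in> carrier Q" for r q
      using enlarge \<sigma>_smult[OF that] \<sigma>_closed that rmodule_Q smult_closed
      by (simp add: rmodule_def)
    show "\<exists>q\<in>carrier Q. E +>\<^bsub>A\<^esub> \<sigma> q = E +>\<^bsub>A\<^esub> a" if "a \<in> carrier A" for a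
      using enlarge \<sigma>_onto[OF that] \<sigma>_closed that by metis
  qed (use rmodule_Q rmodule_A E \<sigma>_closed in auto)
qed

section \<open>Formations\<close>

lemma formation_rmodule: "formation R M \<Longrightarrow> M Q \<Longrightarrow> rmodule R Q"
  unfolding formation_def by blast

lemma formation_quot_mod:
  "formation R M \<Longrightarrow> M Q \<Longrightarrow> rsubmodule B R Q \<Longrightarrow> in_class R M (quot_mod Q B)"
  unfolding formation_def by blast

lemma formation_quot_mod_Int:
  fixes A :: "('r, 'a) module" and M :: "('r, 'a) module \<Rightarrow> bool"
  assumes "formation R M" "rmodule R A" "rsubmodule B R A" "rsubmodule C R A"
    and "in_class R M (quot_mod A B)" "in_class R M (quot_mod A C)"
  shows "in_class R M (quot_mod A (B \<inter> C))"
proof -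
  have "in_class R M (quot_mod A (\<Inter>{B, C}))"
    using assms unfolding formation_def by (metis empty_not_insert finite.emptyI finite.insertI insertE singletonD)
  then show ?thesis by simp
qed

lemma in_class_quot_mod_carrier:
  assumes "formation R M" "M Q" "rmodule R A"
  shows "in_class R M (quot_mod A (carrier A))"
  using assms formation_rmodule formation_quot_mod rsubmodule_carrier
    rmod_isomorphic_quot_mod_carrier in_class_rmod_isomorphic
  by metis

lemma in_class_quot_mod_mono:
  assumes F: "formation R M" and A: "rmodule R A"
    and D: "rsubmodule D R A" and E: "rsubmodule E R A" and DE: "D \<subseteq> E"
    and "in_class R M (quot_mod A D)"
  shows "in_class R M (quot_mod A E)"
proof -
  obtain Q f where MQ: "M Q" and f: "rmod_iso R Q (quot_mod A D) f"
    using assms(6) unfolding in_class_def rmod_isomorphic_def by blast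
  have Q: "rmodule R Q" using formation_rmodule[OF F MQ] .
  obtain \<sigma> where "quot_epimorphism R Q A D \<sigma>"
    using quot_epimorphism_if_rmod_iso_quot_mod[OF Q A D f] by blast
  then have "quot_epimorphism R Q A E \<sigma>" using quot_epimorphism_mono E DE by blast
  then interpret quot_epimorphism R Q A E \<sigma> .
  show ?thesis
    using formation_quot_mod[OF F MQ rsubmodule_preimage] rmod_isomorphic_quot_mod_preimage
      in_class_rmod_isomorphic
    by blast
qed

section \<open>Centralizers in RG-modules\<close>

context
  fixes R :: "('r, 'm) ring_scheme" and G :: "('g, 'n) monoid_scheme"
    and A :: "('r, 'a, 'c) module_scheme" and act :: "'a \<Rightarrow> 'g \<Rightarrow> 'a"
  assumes rg: "rg_module R G A act"
begin

lemma rg_module_rmodule: "rmodule R A"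
  using rg by (simp add: rg_module_def)

lemma rg_module_group: "group G"
  using rg by (simp add: rg_module_def)

lemma act_closed: "x \<in> carrier G \<Longrightarrow> a \<in> carrier A \<Longrightarrow> act a x \<in> carrier A"
  using rg by (simp add: rg_module_def)

lemma act_add:
  "x \<in> carrier G \<Longrightarrow> a \<in> carrier A \<Longrightarrow> b \<in> carrier A \<Longrightarrow> act (a \<oplus>\<^bsub>A\<^esub> b) x = act a x \<oplus>\<^bsub>A\<^esub> act b x"
  using rg by (simp add: rg_module_def)

lemma act_smult:
  "x \<in> carrier G \<Longrightarrow> r \<in> carrier R \<Longrightarrow> a \<in> carrier A \<Longrightarrow> act (r \<odot>\<^bsub>A\<^esub> a) x = r \<odot>\<^bsub>A\<^esub> act a x"
  using rg by (simp add: rg_module_def)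

lemma act_one: "a \<in> carrier A \<Longrightarrow> act a \<one>\<^bsub>G\<^esub> = a"
  using rg by (simp add: rg_module_def)

lemma act_act:
  "x \<in> carrier G \<Longrightarrow> y \<in> carrier G \<Longrightarrow> a \<in> carrier A \<Longrightarrow> act (act a x) y = act a (x \<otimes>\<^bsub>G\<^esub> y)"
  using rg by (simp add: rg_module_def)

lemma act_act_inv: "x \<in> carrier G \<Longrightarrow> a \<in> carrier A \<Longrightarrow> act (act a x) (inv\<^bsub>G\<^esub> x) = a"
  using act_act act_one group.r_inv group.inv_closed rg_module_group by metis

lemma act_inv_act: "x \<in> carrier G \<Longrightarrow> a \<in> carrier A \<Longrightarrow> act (act a (inv\<^bsub>G\<^esub> x)) x = a"
  using act_act act_one group.l_inv group.inv_closed rg_module_group by metis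

lemma group_hom_act: "x \<in> carrier G \<Longrightarrow> group_hom (add_monoid A) (add_monoid A) (\<lambda>a. act a x)"
  using rg_module_rmodule act_closed act_add
  by (auto simp: group_hom_def group_hom_axioms_def hom_def rmodule_def abelian_group.a_group)

lemma rsubmodule_centralizer_mod:
  assumes x: "x \<in> carrier G"
  shows "rsubmodule (centralizer_mod A act x) R A"
  unfolding rsubmodule_def
proof (intro conjI ballI)
  interpret AA: abelian_group A using rg_module_rmodule by (simp add: rmodule_def)
  interpret hom: group_hom "add_monoid A" "add_monoid A" "\<lambda>a. act a x" using group_hom_act[OF x] .
  have zero: "act \<zero>\<^bsub>A\<^esub> x = \<zero>\<^bsub>A\<^esub>" using hom.hom_one by simp
  have neg: "act (\<ominus>\<^bsub>A\<^esub> a) x = \<ominus>\<^bsub>A\<^esub> act a x" if "a \<in> carrier A" for a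
    using hom.hom_inv that by (simp add: a_inv_def)
  show "subgroup (centralizer_mod A act x) (add_monoid A)"
  proof (rule AA.add.subgroupI)
    show "centralizer_mod A act x \<noteq> {}" using zero by (auto simp: centralizer_mod_def)
  qed (auto simp: centralizer_mod_def act_add[OF x] neg simp flip: a_inv_def)
next
  fix r b assume "r \<in> carrier R" "b \<in> centralizer_mod A act x"
  then show "r \<odot>\<^bsub>A\<^esub> b \<in> centralizer_mod A act x"
    using rg_module_rmodule act_smult[OF x] by (auto simp: centralizer_mod_def rmodule_def)
qed

lemma centralizer_mod_inv:
  assumes x: "x \<in> carrier G"
  shows "centralizer_mod A act (inv\<^bsub>G\<^esub> x) = centralizer_mod A act x"
proof -
  have "centralizer_mod A act y \<subseteq> centralizer_mod A act (inv\<^bsub>G\<^esub> y)" if y: "y \<in> carrier G" for y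
    using act_act_inv[OF y] by (force simp: centralizer_mod_def)
  then show ?thesis
    using x group.inv_closed group.inv_inv rg_module_group by (metis subset_antisym)
qed

lemma centralizer_mod_Int_subset:
  "x \<in> carrier G \<Longrightarrow> y \<in> carrier G \<Longrightarrow>
    centralizer_mod A act x \<inter> centralizer_mod A act y \<subseteq> centralizer_mod A act (x \<otimes>\<^bsub>G\<^esub> y)"
  by (auto simp: centralizer_mod_def simp flip: act_act)

lemma act_inj: "x \<in> carrier G \<Longrightarrow> a \<in> carrier A \<Longrightarrow> b \<in> carrier A \<Longrightarrow> act a x = act b x \<longleftrightarrow> a = b"
  using act_act_inv by metis

lemma act_conj:
  assumes x: "x \<in> carrier G" and h: "h \<in> carrier G" and a: "a \<in> carrier A"
  shows "act (act a x) (inv\<^bsub>G\<^esub> x \<otimes>\<^bsub>G\<^esub> h \<otimes>\<^bsub>G\<^esub> x) = act (act a h) x"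
proof -
  interpret group G by (rule rg_module_group)
  have "x \<otimes>\<^bsub>G\<^esub> (inv\<^bsub>G\<^esub> x \<otimes>\<^bsub>G\<^esub> h \<otimes>\<^bsub>G\<^esub> x) = h \<otimes>\<^bsub>G\<^esub> x"
    using x h by (simp add: m_assoc flip: m_assoc[of x "inv\<^bsub>G\<^esub> x"])
  then show ?thesis using x h a by (simp add: act_act)
qed

lemma centralizer_mod_conj:
  assumes x: "x \<in> carrier G" and h: "h \<in> carrier G"
  shows "{a \<in> carrier A. act a x \<in> centralizer_mod A act (inv\<^bsub>G\<^esub> x \<otimes>\<^bsub>G\<^esub> h \<otimes>\<^bsub>G\<^esub> x)}
    = centralizer_mod A act h"
  using act_conj[OF x h] act_inj[OF x] act_closed x h by (auto simp: centralizer_mod_def)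

lemma quot_epimorphism_act:
  assumes E: "rsubmodule E R A" and x: "x \<in> carrier G"
  shows "quot_epimorphism R A A E (\<lambda>a. act a x)"
proof
  show "\<exists>q\<in>carrier A. E +>\<^bsub>A\<^esub> act q x = E +>\<^bsub>A\<^esub> a" if "a \<in> carrier A" for a
    using act_inv_act[OF x that] act_closed[OF group.inv_closed[OF rg_module_group x] that] by metis
qed (use rg_module_rmodule E x act_closed act_add act_smult in auto)

lemma rmod_isomorphic_quot_mod_centralizer_conj:
  assumes x: "x \<in> carrier G" and h: "h \<in> carrier G"
  shows "rmod_isomorphic R (quot_mod A (centralizer_mod A act h))
    (quot_mod A (centralizer_mod A act (inv\<^bsub>G\<^esub> x \<otimes>\<^bsub>G\<^esub> h \<otimes>\<^bsub>G\<^esub> x)))"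
proof -
  have "inv\<^bsub>G\<^esub> x \<otimes>\<^bsub>G\<^esub> h \<otimes>\<^bsub>G\<^esub> x \<in> carrier G"
    using x h group.inv_closed[OF rg_module_group] monoid.m_closed[OF group.is_monoid[OF rg_module_group]]
    by metis
  then interpret quot_epimorphism R A A "centralizer_mod A act (inv\<^bsub>G\<^esub> x \<otimes>\<^bsub>G\<^esub> h \<otimes>\<^bsub>G\<^esub> x)"
    "\<lambda>a. act a x"
    using quot_epimorphism_act rsubmodule_centralizer_mod x by blast
  show ?thesis using rmod_isomorphic_quot_mod_preimage centralizer_mod_conj[OF x h] by simp
qed

end

section \<open>The normal subgroup Coc\<close>

context
  fixes R :: "('r, 'm) ring_scheme" and M :: "('r, 'a) module \<Rightarrow> bool"
    and G :: "('g, 'n) monoid_scheme" and A :: "('r, 'a) module" and act :: "'a \<Rightarrow> 'g \<Rightarrow> 'a"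
  assumes F: "formation R M" and nonempty: "\<exists>Q. M Q" and rg: "rg_module R G A act"
begin

lemma one_in_Coc: "\<one>\<^bsub>G\<^esub> \<in> Coc R M G A act"
proof -
  have "centralizer_mod A act \<one>\<^bsub>G\<^esub> = carrier A"
    using act_one[OF rg] by (auto simp: centralizer_mod_def)
  then show ?thesis
    using in_class_quot_mod_carrier[OF F _ rg_module_rmodule[OF rg]] nonempty
      monoid.one_closed[OF group.is_monoid[OF rg_module_group[OF rg]]]
    by (auto simp: Coc_def)
qed

lemma inv_in_Coc: "x \<in> Coc R M G A act \<Longrightarrow> inv\<^bsub>G\<^esub> x \<in> Coc R M G A act"
  using centralizer_mod_inv[OF rg] group.inv_closed[OF rg_module_group[OF rg]]
  by (auto simp: Coc_def)

lemma mult_in_Coc: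
  assumes "x \<in> Coc R M G A act" "y \<in> Coc R M G A act"
  shows "x \<otimes>\<^bsub>G\<^esub> y \<in> Coc R M G A act"
proof -
  have x: "x \<in> carrier G" "in_class R M (quot_mod A (centralizer_mod A act x))"
    and y: "y \<in> carrier G" "in_class R M (quot_mod A (centralizer_mod A act y))"
    using assms by (auto simp: Coc_def)
  have xy: "x \<otimes>\<^bsub>G\<^esub> y \<in> carrier G"
    using x y monoid.m_closed[OF group.is_monoid[OF rg_module_group[OF rg]]] by blast
  have Int: "rsubmodule (centralizer_mod A act x \<inter> centralizer_mod A act y) R A"
    using rsubmodule_Int rg_module_rmodule[OF rg] rsubmodule_centralizer_mod[OF rg] x y by blast
  have "in_class R M (quot_mod A (centralizer_mod A act x \<inter> centralizer_mod A act y))"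
    using formation_quot_mod_Int[OF F rg_module_rmodule[OF rg]] rsubmodule_centralizer_mod[OF rg] x y
    by blast
  then have "in_class R M (quot_mod A (centralizer_mod A act (x \<otimes>\<^bsub>G\<^esub> y)))"
    using in_class_quot_mod_mono[OF F rg_module_rmodule[OF rg] Int
        rsubmodule_centralizer_mod[OF rg xy] centralizer_mod_Int_subset[OF rg x(1) y(1)]]
    by blast
  then show ?thesis using xy by (simp add: Coc_def)
qed

lemma conj_in_Coc:
  assumes g: "g \<in> carrier G" and h: "h \<in> Coc R M G A act"
  shows "g \<otimes>\<^bsub>G\<^esub> h \<otimes>\<^bsub>G\<^esub> inv\<^bsub>G\<^esub> g \<in> Coc R M G A act"
proof -
  interpret group G by (rule rg_module_group[OF rg])
  have hC: "h \<in> carrier G" "in_class R M (quot_mod A (centralizer_mod A act h))"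
    using h by (auto simp: Coc_def)
  have "rmod_isomorphic R (quot_mod A (centralizer_mod A act h))
      (quot_mod A (centralizer_mod A act (g \<otimes>\<^bsub>G\<^esub> h \<otimes>\<^bsub>G\<^esub> inv\<^bsub>G\<^esub> g)))"
    using rmod_isomorphic_quot_mod_centralizer_conj[OF rg inv_closed[OF g] hC(1)] g by simp
  then show ?thesis
    using in_class_rmod_isomorphic[OF hC(2)] g hC(1) by (simp add: Coc_def)
qed

end

theorem lemma2p2:
  fixes R :: "('r, 'm) ring_scheme"
    and M :: "('r, 'a) module \<Rightarrow> bool"
    and G :: "('g, 'n) monoid_scheme"
    and A :: "('r, 'a) module"
    and act :: "'a \<Rightarrow> 'g \<Rightarrow> 'a"
  assumes "ring R"
    and "formation R M"
    and "\<exists>Q. M Q"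
    and "group G"
    and "rg_module R G A act"
  shows "Coc R M G A act \<lhd> G"
proof -
  interpret group G by fact
  have "subgroup (Coc R M G A act) G"
  proof (rule subgroupI)
    show "Coc R M G A act \<subseteq> carrier G" by (auto simp: Coc_def)
    show "Coc R M G A act \<noteq> {}" using one_in_Coc[OF assms(2,3,5)] by blast
  qed (fact inv_in_Coc[OF assms(2,3,5)] mult_in_Coc[OF assms(2,3,5)])+
  then show ?thesis
    using normal_inv_iff conj_in_Coc[OF assms(2,3,5)] by blast
qed

end
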